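(* There exist a continuum $K$ and a pairwise disjoint sequence $(f_n)_{n\in\mathbb{N}}$ in $C_1(K)$ such that the extension $K((f_n)_{n\in\mathbb{N}})$ is disconnected.
   Context: All spaces are Hausdorff. A continuum is a metrizable, compact, connected space. For a compact space $K$, $C_1(K)$ denotes the set of continuous functions $K\to[0,1]$; $f,g$ are disjoint if $f\cdot g=0$. For a real function $f$ on $K$, $supp(f)$ is the closure of $\{x\in K: f(x)\neq 0\}$. For a pairwise disjoint sequence $(f_n)_{n\in\mathbb{N}}$ in $C_1(K)$, let $D((f_n)_{n\in\mathbb{N}})$ be the union of all open sets $U\subseteq K$ such that $\{n: U\cap supp(f_n)\neq\emptyset\}$ is finite. The extension of $K$ by $(f_n)_{n\in\mathbb{N}}$, denoted $K((f_n)_{n\in\mathbb{N}})$, is the closure in $K\times[0,1]$ of the graph of the function $\sum_{n\in\mathbb{N}} f_n$ restricted to $D((f_n)_{n\in\mathbb{N}})$. *)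

theory Defs
  imports "HOL-Analysis.Analysis"
begin

definition continuum :: "'a topology \<Rightarrow> bool" where
  "continuum X \<longleftrightarrow> metrizable_space X \<and> Hausdorff_space X \<and> compact_space X
      \<and> connected_space X \<and> topspace X \<noteq> {}"

definition C1 :: "'a topology \<Rightarrow> ('a \<Rightarrow> real) set" where
  "C1 X = {f. continuous_map X euclideanreal f \<and> f ` topspace X \<subseteq> {0..1}}"

definition pairwise_disjoint_seq :: "'a topology \<Rightarrow> (nat \<Rightarrow> 'a \<Rightarrow> real) \<Rightarrow> bool" where
  "pairwise_disjoint_seq X f \<longleftrightarrow>
     (\<forall>n m. n \<noteq> m \<longrightarrow> (\<forall>x\<in>topspace X. f n x * f m x = 0))"

definition supp :: "'a topology \<Rightarrow> ('a \<Rightarrow> real) \<Rightarrow> 'a set" where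
  "supp X g = X closure_of {x \<in> topspace X. g x \<noteq> 0}"

definition Dset :: "'a topology \<Rightarrow> (nat \<Rightarrow> 'a \<Rightarrow> real) \<Rightarrow> 'a set" where
  "Dset X f = \<Union>{U. openin X U \<and> finite {n. U \<inter> supp X (f n) \<noteq> {}}}"

definition extension :: "'a topology \<Rightarrow> (nat \<Rightarrow> 'a \<Rightarrow> real) \<Rightarrow> ('a \<times> real) set" where
  "extension X f = (prod_topology X (top_of_set {0..1})) closure_of
      {(x, \<Sum>n. f n x) | x. x \<in> Dset X f}"

end

theory Submission
  imports Defs
begin

text \<open>Take for \<open>K\<close> a topologist's sine curve: the segment \<open>{0} \<times> [-2, 1]\<close> together
  with the graph of \<open>cos (2\<pi> / a)\<close>, \<open>0 < a \<le> 1\<close>. The \<open>n\<close>-th function lives on the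
  \<open>n\<close>-th oscillation \<open>1/a \<in> [n, n + 1]\<close> of the graph, where it equals \<open>2 - 3 \<cdot> height\<close>
  clamped to \<open>[0, 1]\<close>: it vanishes where the height is at least \<open>2/3\<close> and has a plateau at
  value \<open>1\<close> where the height is at most \<open>1/3\<close>. As the oscillations accumulate on the segment,
  no point of the segment of height in \<open>[-1, 2/3)\<close> lies in \<open>D\<close>, while over the graph the
  sum of the functions is \<open>1\<close> wherever the height is below \<open>1/3\<close>. Hence the continuous map
  \<open>(x, y) \<mapsto> max y (clamp (3 \<cdot> height x))\<close> takes only the values \<open>0\<close> and \<open>1\<close> on the
  extension, and it takes both, at the two ends of the segment.\<close>

section \<open>Extensions\<close>

lemma Dset_subset_topspace: "Dset X f \<subseteq> topspace X"
  unfolding Dset_def using openin_subset by blast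

lemma DsetI:
  assumes "openin X U" "x \<in> U" "\<And>n. U \<inter> supp X (f n) = {}"
  shows "x \<in> Dset X f"
  using assms unfolding Dset_def by auto

lemma not_in_DsetI:
  assumes "\<And>U. openin X U \<Longrightarrow> x \<in> U \<Longrightarrow> infinite {n. U \<inter> supp X (f n) \<noteq> {}}"
  shows "x \<notin> Dset X f"
  using assms unfolding Dset_def by blast

lemma in_supp: "x \<in> topspace X \<Longrightarrow> g x \<noteq> 0 \<Longrightarrow> x \<in> supp X g"
  unfolding supp_def using closure_of_subset[of "{x \<in> topspace X. g x \<noteq> 0}" X] by blast

lemma graph_point_in_extension:
  assumes "x \<in> Dset X f" "(\<Sum>n. f n x) \<in> {0..1}"
  shows "(x, \<Sum>n. f n x) \<in> extension X f"
proof -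
  have "x \<in> topspace X"
    using assms(1) Dset_subset_topspace[of X f] by blast
  then show ?thesis
    unfolding extension_def using assms
    by (intro in_closure_of[THEN iffD2]) (auto intro: exI[of _ "topspace X"])
qed

lemma extension_subset_closedin:
  assumes "closedin (prod_topology X (top_of_set {0..1})) F"
    "\<And>x. x \<in> Dset X f \<Longrightarrow> (x, \<Sum>n. f n x) \<in> F"
  shows "extension X f \<subseteq> F"
  unfolding extension_def using assms by (intro closure_of_minimal) auto

lemma not_connectedin_two_valued:
  assumes "continuous_map Y euclideanreal \<phi>" "\<phi> ` S \<subseteq> {0, 1}"
    and "a \<in> S" "\<phi> a = 0" "b \<in> S" "\<phi> b = 1"
  shows "\<not> connectedin Y S"
proof
  assume "connectedin Y S"
  then have "connected (\<phi> ` S)"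
    using connectedin_continuous_map_image[OF assms(1)] by simp
  then have "{0..1} \<subseteq> \<phi> ` S"
    using assms(3-6) by (intro connected_contains_Icc) force+
  then have "1/2 \<in> \<phi> ` S"
    by auto
  then show False
    using assms(2) by auto
qed

section \<open>Bumps on the oscillations of the cosine\<close>

definition clamp01 :: "real \<Rightarrow> real" where
  "clamp01 y = max 0 (min 1 y)"

lemma clamp01_bounds: "0 \<le> clamp01 y" "clamp01 y \<le> 1"
  by (auto simp: clamp01_def)

lemma continuous_on_clamp01 [continuous_intros]:
  "continuous_on S f \<Longrightarrow> continuous_on S (\<lambda>x. clamp01 (f x))"
  unfolding clamp01_def by (intro continuous_intros)

lemma cos_2pi_of_nat [simp]: "cos (2 * pi * real n) = 1"
  by (metis cos_2npi mult.assoc mult.commute)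

lemma cos_2pi_of_nat_add [simp]: "cos (2 * pi * real n + x) = cos x"
  by (simp add: cos_add) (metis mult.assoc mult.commute sin_2npi)

definition bump :: "nat \<Rightarrow> real \<Rightarrow> real" where
  "bump n u = (if u \<in> {real n..real n + 1} then clamp01 (2 - 3 * cos (2 * pi * u)) else 0)"

lemma bump_bounds: "0 \<le> bump n u" "bump n u \<le> 1"
  by (auto simp: bump_def clamp01_bounds)

lemma continuous_bump: "continuous_on UNIV (bump n)"
proof -
  have "continuous_on ({real n..real n + 1} \<union> ({..real n} \<union> {real n + 1..}))
          (\<lambda>u. if u \<in> {real n..real n + 1} then clamp01 (2 - 3 * cos (2 * pi * u)) else 0)"
  proof (rule continuous_on_cases)
    show "\<forall>u. u \<in> {real n..real n + 1} \<and> u \<notin> {real n..real n + 1}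
             \<or> u \<in> {..real n} \<union> {real n + 1..} \<and> u \<in> {real n..real n + 1}
             \<longrightarrow> clamp01 (2 - 3 * cos (2 * pi * u)) = 0"
      using cos_2pi_of_nat[of "Suc n"] by (auto simp: clamp01_def add.commute)
    show "continuous_on {real n..real n + 1} (\<lambda>u. clamp01 (2 - 3 * cos (2 * pi * u)))"
      by (intro continuous_intros)
  qed auto
  moreover have "{real n..real n + 1} \<union> ({..real n} \<union> {real n + 1..}) = UNIV"
    by auto
  ultimately show ?thesis
    unfolding bump_def by simp
qed

lemma bump_eq_0_outside: "u \<notin> {real n..real n + 1} \<Longrightarrow> bump n u = 0"
  unfolding bump_def by (simp only: if_False)

text \<open>Distinct intervals meet at most in an integer, where the bumps vanish.\<close>
lemma bump_eq_0_on_other_interval: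
  assumes "n \<noteq> m" "u \<in> {real m..real m + 1}"
  shows "bump n u = 0"
proof (cases "u \<in> {real n..real n + 1}")
  case True
  then have "u = real (max n m)"
    using assms by (cases "n < m") (auto simp: max_def)
  then show ?thesis
    by (simp add: bump_def clamp01_def)
qed (rule bump_eq_0_outside)

lemma bump_mult_bump: "n \<noteq> m \<Longrightarrow> bump n u * bump m u = 0"
  by (metis bump_def bump_eq_0_on_other_interval mult_not_zero)

lemma suminf_bump:
  assumes "0 \<le> u"
  shows "(\<Sum>n. bump n u) = clamp01 (2 - 3 * cos (2 * pi * u))"
proof -
  define N where "N = nat \<lfloor>u\<rfloor>"
  have N: "u \<in> {real N..real N + 1}"
    using assms by (auto simp: N_def)
  have "bump n u = 0" if "n \<noteq> N" for n
    using bump_eq_0_on_other_interval[OF that N] .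
  then have "(\<lambda>n. bump n u) = (\<lambda>n. if n = N then bump N u else 0)"
    by auto
  then have "(\<lambda>n. bump n u) sums bump N u"
    using sums_single[of N "\<lambda>_. bump N u"] by simp
  then show ?thesis
    using N by (simp add: sums_iff bump_def)
qed

text \<open>The cut-off at \<open>1 / (n + 1)\<close> changes nothing for \<open>a > 0\<close> (see \<open>recip_bump_pos\<close>);
  it only makes continuity at \<open>0\<close> evident.\<close>
definition recip_bump :: "nat \<Rightarrow> real \<Rightarrow> real" where
  "recip_bump n a = (if a \<le> 1 / (real n + 1) then 0 else bump n (1 / a))"

lemma recip_bump_bounds: "0 \<le> recip_bump n a" "recip_bump n a \<le> 1"
  by (auto simp: recip_bump_def bump_bounds)

lemma recip_bump_nonpos [simp]: "a \<le> 0 \<Longrightarrow> recip_bump n a = 0"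
  by (simp add: recip_bump_def order_trans[of a 0])

lemma recip_bump_pos:
  assumes "0 < a"
  shows "recip_bump n a = bump n (1 / a)"
proof (cases "a \<le> 1 / (real n + 1)")
  case True
  then have "real n + 1 \<le> 1 / a"
    using assms by (simp add: field_simps)
  then have "1 / a \<in> {real (Suc n)..real (Suc n) + 1} \<or> 1 / a \<notin> {real n..real n + 1}"
    by auto
  then have "bump n (1 / a) = 0"
    using bump_eq_0_on_other_interval[of n "Suc n"] bump_eq_0_outside by auto
  then show ?thesis
    using True by (simp add: recip_bump_def)
qed (simp add: recip_bump_def)

lemma continuous_recip_bump: "continuous_on UNIV (recip_bump n)"
proof -
  let ?c = "1 / (real n + 1)"
  have "continuous_on ({..?c} \<union> {?c..}) (\<lambda>a. if a \<le> ?c then 0 else bump n (1 / a))"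
  proof (rule continuous_on_cases)
    show "continuous_on {?c..} (\<lambda>a. bump n (1 / a))"
      by (intro continuous_on_compose2[OF continuous_bump] continuous_intros) auto
    show "\<forall>a. a \<in> {..?c} \<and> \<not> a \<le> ?c \<or> a \<in> {?c..} \<and> a \<le> ?c \<longrightarrow> 0 = bump n (1 / a)"
      using recip_bump_pos[of ?c n] by (auto simp: recip_bump_def)
  qed auto
  moreover have "{..?c} \<union> {?c..} = UNIV"
    by auto
  ultimately show ?thesis
    unfolding recip_bump_def[abs_def] by simp
qed

lemma recip_bump_mult_recip_bump: "n \<noteq> m \<Longrightarrow> recip_bump n a * recip_bump m a = 0"
  by (cases "0 < a") (simp_all add: recip_bump_pos bump_mult_bump)

section \<open>A topologist's sine curve\<close>

lemma homeomorphic_map_pullback_topology: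
  assumes "inj_on p A" "p ` A \<subseteq> topspace Y"
  shows "homeomorphic_map (pullback_topology A p Y) (subtopology Y (p ` A)) p"
proof (rule bijective_open_imp_homeomorphic_map)
  show "continuous_map (pullback_topology A p Y) (subtopology Y (p ` A)) p"
    using continuous_map_pullback[of Y Y id A p] assms(2)
    by (auto simp: continuous_map_in_subtopology topspace_pullback_topology)
  show "open_map (pullback_topology A p Y) (subtopology Y (p ` A)) p"
    unfolding open_map_def openin_pullback_topology openin_subtopology by auto
qed (use assms in \<open>auto simp: topspace_pullback_topology inj_on_def\<close>)

lemma continuum_pullback_topology:
  fixes p :: "'a \<Rightarrow> 'b::metric_space"
  assumes "inj_on p A" "compact (p ` A)" "connected (p ` A)" "A \<noteq> {}"
  shows "continuum (pullback_topology A p euclidean)"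
proof -
  let ?X = "pullback_topology A p euclidean" and ?S = "top_of_set (p ` A)"
  have hom: "?X homeomorphic_space ?S"
    using homeomorphic_map_pullback_topology[OF assms(1), of euclidean]
    by (auto intro: homeomorphic_map_imp_homeomorphic_space)
  have "metrizable_space ?X"
    by (simp add: homeomorphic_metrizable_space[OF hom] metrizable_space_subtopology
        metrizable_space_euclidean)
  moreover have "compact_space ?X"
    using assms(2) by (simp add: homeomorphic_compact_space[OF hom] compact_space_subtopology)
  moreover have "connected_space ?X"
    using assms(3) by (simp add: homeomorphic_connected_space[OF hom] connected_space_subtopology)
  moreover have "topspace ?X \<noteq> {}"
    using assms(4) by (simp add: topspace_pullback_topology)
  ultimately show ?thesis
    unfolding continuum_def by (simp add: metrizable_imp_Hausdorff_space)
qed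

definition sine_curve :: "(real \<times> real) set" where
  "sine_curve = ({0} \<times> {-2..1}) \<union> (\<lambda>a. (a, cos (2 * pi / a))) ` {0<..1}"

lemma compact_sine_curve: "compact sine_curve"
proof -
  define off_graph
    where "off_graph = {z :: real \<times> real. fst z \<noteq> 0 \<and> snd z \<noteq> cos (2 * pi / fst z)}"
  have "continuous_on {z :: real \<times> real. fst z \<noteq> 0} (\<lambda>z. snd z - cos (2 * pi / fst z))"
    by (intro continuous_intros) auto
  moreover have "open {z :: real \<times> real. fst z \<noteq> 0}"
    by (intro open_Collect_neq continuous_intros)
  ultimately have "open ({z. fst z \<noteq> 0} \<inter> (\<lambda>z. snd z - cos (2 * pi / fst z)) -` (- {0}))"
    by (intro continuous_open_preimage) auto
  moreover have "{z. fst z \<noteq> 0} \<inter> (\<lambda>z. snd z - cos (2 * pi / fst z)) -` (- {0}) = off_graph"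
    by (auto simp: off_graph_def)
  ultimately have "closed (- off_graph)"
    by (simp add: closed_Compl)
  moreover have curve_eq: "sine_curve = ({0..1} \<times> {-2..1}) \<inter> - off_graph"
    by (auto simp: sine_curve_def off_graph_def image_iff) (smt (verit) cos_ge_minus_one)
  moreover have "compact ({0..1::real} \<times> {-2..1::real})"
    by (intro compact_Times compact_Icc)
  ultimately show ?thesis
    unfolding curve_eq by (intro compact_Int_closed)
qed

text \<open>The graph accumulates at the top \<open>(0, 1)\<close> of the segment along \<open>a = 1 / (n + 1)\<close>.\<close>
lemma connected_sine_curve: "connected sine_curve"
proof -
  let ?segment = "{0} \<times> {-2..1::real}"
    and ?graph = "(\<lambda>a. (a, cos (2 * pi / a))) ` {0<..1}"
  have "connected ?graph"
    by (intro connected_continuous_image continuous_intros) (auto simp: is_interval_connected)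
  have "(0, 1) \<in> closure ?graph"
  proof -
    have "(inverse (real (Suc n)), 1) \<in> ?graph" for n
    proof -
      have "cos (2 * pi / inverse (real (Suc n))) = 1"
        using cos_2pi_of_nat[of "Suc n"] by (simp add: divide_inverse del: of_nat_Suc)
      moreover have "inverse (real (Suc n)) \<in> {0<..1}"
        by (simp add: inverse_le_1_iff)
      ultimately show ?thesis
        by (auto simp: image_iff simp del: of_nat_Suc)
    qed
    moreover have "(\<lambda>n. (inverse (real (Suc n)), 1)) \<longlonglongrightarrow> (0, 1 :: real)"
      by (intro tendsto_Pair LIMSEQ_inverse_real_of_nat tendsto_const)
    ultimately show ?thesis
      unfolding closure_sequential by (intro exI[of _ "\<lambda>n. (inverse (real (Suc n)), 1)"]) auto
  qed
  then have "connected (insert (0, 1) ?graph)"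
    by (intro connected_intermediate_closure[OF \<open>connected ?graph\<close>]) (auto simp: closure_subset)
  moreover have "connected ?segment"
    by (simp add: connected_Times)
  moreover have "(0, 1) \<in> ?segment \<inter> insert (0, 1) ?graph"
    by simp
  ultimately have "connected (?segment \<union> insert (0, 1) ?graph)"
    by (intro connected_Un) blast+
  moreover have "?segment \<union> insert (0, 1) ?graph = sine_curve"
    by (auto simp: sine_curve_def)
  ultimately show ?thesis
    by simp
qed

text \<open>The theorem asks for a topology on the reals, so the sine curve is transported to \<open>[-2, 2]\<close>
  along an injective (but discontinuous) parametrisation.\<close>
definition sine_param :: "real \<Rightarrow> real \<times> real" where
  "sine_param t = (if t \<le> 1 then (0, t) else (t - 1, cos (2 * pi / (t - 1))))"

definition sine_space :: "real topology" where
  "sine_space = pullback_topology {-2..2} sine_param euclidean"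

lemma topspace_sine_space [simp]: "topspace sine_space = {-2..2}"
  by (simp add: sine_space_def topspace_pullback_topology)

lemma openin_sine_space:
  "openin sine_space U \<longleftrightarrow> (\<exists>V. open V \<and> U = sine_param -` V \<inter> {-2..2})"
  by (auto simp: sine_space_def openin_pullback_topology)

lemma continuous_map_sine_space:
  "continuous_on UNIV g \<Longrightarrow> continuous_map sine_space euclideanreal (\<lambda>t. g (sine_param t))"
  using continuous_map_pullback[of euclidean euclideanreal g "{-2..2}" sine_param]
  by (simp add: sine_space_def o_def)

lemma inj_on_sine_param: "inj_on sine_param {-2..2}"
  by (auto simp: inj_on_def sine_param_def split: if_splits)

lemma sine_param_image: "sine_param ` {-2..2} = sine_curve"
proof -
  have "sine_param ` {-2..1} = {0} \<times> {-2..1}"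
    by (auto simp: sine_param_def image_iff)
  moreover have "sine_param ` {1<..2} = (\<lambda>a. (a, cos (2 * pi / a))) ` {0<..1}"
  proof -
    have "sine_param ` {1<..2} = (\<lambda>a. (a, cos (2 * pi / a))) ` ((\<lambda>t. t - 1) ` {1<..2})"
      by (auto simp: sine_param_def image_image)
    moreover have "(\<lambda>t. t - 1) ` {1<..2} = {0<..(1::real)}"
      by (auto simp: image_iff intro!: bexI[where x = "_ + 1"])
    ultimately show ?thesis
      by simp
  qed
  moreover have "{-2..2} = {-2..1} \<union> {1<..(2::real)}"
    by auto
  ultimately show ?thesis
    unfolding sine_curve_def by (metis image_Un)
qed

lemma continuum_sine_space: "continuum sine_space"
  unfolding sine_space_def
  by (rule continuum_pullback_topology)
    (simp_all add: inj_on_sine_param sine_param_image compact_sine_curve connected_sine_curve)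

definition sine_bumps :: "nat \<Rightarrow> real \<Rightarrow> real" where
  "sine_bumps n t = recip_bump n (fst (sine_param t))"

lemma sine_bumps_segment [simp]: "t \<le> 1 \<Longrightarrow> sine_bumps n t = 0"
  by (simp add: sine_bumps_def sine_param_def)

lemma sine_bumps_graph: "1 < t \<Longrightarrow> sine_bumps n t = bump n (1 / (t - 1))"
  by (simp add: sine_bumps_def sine_param_def recip_bump_pos)

lemma sine_bumps_in_C1: "sine_bumps n \<in> C1 sine_space"
proof -
  have "continuous_on UNIV (\<lambda>z :: real \<times> real. recip_bump n (fst z))"
    by (intro continuous_on_compose2[OF continuous_recip_bump] continuous_intros) auto
  then have "continuous_map sine_space euclideanreal (sine_bumps n)"
    unfolding sine_bumps_def[abs_def] by (rule continuous_map_sine_space)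
  then show ?thesis
    by (auto simp: C1_def sine_bumps_def recip_bump_bounds)
qed

lemma pairwise_disjoint_sine_bumps: "pairwise_disjoint_seq sine_space sine_bumps"
  by (simp add: pairwise_disjoint_seq_def sine_bumps_def recip_bump_mult_recip_bump)

lemma suminf_sine_bumps:
  assumes "1 < t"
  shows "(\<Sum>n. sine_bumps n t) = clamp01 (2 - 3 * cos (2 * pi / (t - 1)))"
  using assms suminf_bump[of "1 / (t - 1)"] by (simp add: sine_bumps_graph)

lemma suminf_sine_bumps_range: "(\<Sum>n. sine_bumps n t) \<in> {0..1}"
  by (cases "1 < t") (simp_all add: suminf_sine_bumps clamp01_bounds)

lemma supp_sine_bumps:
  "supp sine_space (sine_bumps n) \<subseteq> {t \<in> {-2..2}. snd (sine_param t) \<in> {-1..2/3}}"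
  unfolding supp_def
proof (rule closure_of_minimal)
  have "continuous_map sine_space euclideanreal (\<lambda>t. snd (sine_param t))"
    by (intro continuous_map_sine_space continuous_intros)
  then show "closedin sine_space {t \<in> {-2..2}. snd (sine_param t) \<in> {-1..2/3}}"
    using closedin_continuous_map_preimage[of sine_space euclideanreal _ "{-1..2/3}"] by simp
  show "{t \<in> topspace sine_space. sine_bumps n t \<noteq> 0}
      \<subseteq> {t \<in> {-2..2}. snd (sine_param t) \<in> {-1..2/3}}"
  proof clarify
    fix t :: real
    assume t: "t \<in> topspace sine_space" "sine_bumps n t \<noteq> 0"
    then have "1 < t"
      by (meson sine_bumps_segment not_le)
    moreover have "clamp01 (2 - 3 * cos (2 * pi / (t - 1))) \<noteq> 0"
      using t \<open>1 < t\<close> by (auto simp: sine_bumps_graph bump_def split: if_splits)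
    then have "cos (2 * pi / (t - 1)) \<le> 2/3"
      by (auto simp: clamp01_def)
    ultimately show "t \<in> {-2..2} \<and> snd (sine_param t) \<in> {-1..2/3}"
      using t by (simp add: sine_param_def)
  qed
qed

lemma sine_segment_in_Dset:
  assumes "t \<in> {-2..<-1} \<union> {2/3<..1}"
  shows "t \<in> Dset sine_space sine_bumps"
proof (rule DsetI)
  let ?U = "sine_param -` {z. snd z < -1 \<or> 2/3 < snd z} \<inter> {-2..2}"
  have "open {z :: real \<times> real. snd z < -1 \<or> 2/3 < snd z}"
    by (intro open_Collect_disj open_Collect_less continuous_intros)
  then show "openin sine_space ?U"
    unfolding openin_sine_space by blast
  show "t \<in> ?U"
    using assms by (auto simp: sine_param_def)
  show "?U \<inter> supp sine_space (sine_bumps n) = {}" for n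
    using supp_sine_bumps[of n] by auto
qed

lemma sine_bumps_attain_height:
  assumes "-1 \<le> y" "y \<le> 1" "0 < n"
  obtains a where "0 < a" "a \<le> 1 / real n" "sine_param (1 + a) = (a, y)"
    "sine_bumps n (1 + a) = clamp01 (2 - 3 * y)"
proof
  define u where "u = real n + arccos y / (2 * pi)"
  have "0 \<le> arccos y" "arccos y \<le> pi"
    using arccos_bounded[OF assms(1,2)] by auto
  then have u: "real n \<le> u" "u \<le> real n + 1"
    by (auto simp: u_def field_simps)
  then show "0 < 1 / u" "1 / u \<le> 1 / real n"
    using assms(3) by (auto simp: frac_le)
  have cos_u: "cos (2 * pi * u) = y"
    using assms by (simp add: u_def distrib_left)
  then show "sine_param (1 + 1 / u) = (1 / u, y)"
    using \<open>0 < 1 / u\<close> by (simp add: sine_param_def)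
  show "sine_bumps n (1 + 1 / u) = clamp01 (2 - 3 * y)"
    using \<open>0 < 1 / u\<close> u cos_u by (simp add: sine_bumps_graph bump_def)
qed

text \<open>Every neighbourhood of \<open>(0, t)\<close> meets the plateau of all but finitely many bumps.\<close>
lemma sine_segment_not_in_Dset:
  assumes "-1 \<le> t" "t < 2/3"
  shows "t \<notin> Dset sine_space sine_bumps"
proof (rule not_in_DsetI)
  fix U
  assume "openin sine_space U" "t \<in> U"
  then obtain V where V: "open V" "U = sine_param -` V \<inter> {-2..2}"
    unfolding openin_sine_space by blast
  moreover have "sine_param t = (0, t)"
    using assms by (simp add: sine_param_def)
  ultimately obtain e where e: "0 < e" "ball (0, t) e \<subseteq> V"
    using \<open>t \<in> U\<close> open_contains_ball by force
  obtain N :: nat where N: "0 < N" "inverse (real N) < e"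
    using ex_inverse_of_nat_less[OF \<open>0 < e\<close>] by blast
  have "{N..} \<subseteq> {n. U \<inter> supp sine_space (sine_bumps n) \<noteq> {}}"
  proof
    fix n
    assume "n \<in> {N..}"
    then have "1 / real n \<le> 1 / real N"
      using N(1) by (simp add: frac_le)
    then have n: "0 < n" "1 / real n < e"
      using N \<open>n \<in> {N..}\<close> by (auto simp: inverse_eq_divide)
    obtain a where a: "0 < a" "a \<le> 1 / real n" "sine_param (1 + a) = (a, t)"
      "sine_bumps n (1 + a) = clamp01 (2 - 3 * t)"
      using sine_bumps_attain_height[of t n] assms n(1) by auto
    have "1 / real n \<le> 1"
      using n(1) by simp
    then have "a \<le> 1"
      using a(2) by linarith
    then have "1 + a \<in> {-2..2}"
      using a(1) by simp
    moreover have "sine_param (1 + a) \<in> ball (0, t) e"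
      using a n by (simp add: dist_Pair_Pair dist_real_def)
    ultimately have "1 + a \<in> U"
      using V e by auto
    moreover have "1 + a \<in> supp sine_space (sine_bumps n)"
      using \<open>1 + a \<in> {-2..2}\<close> a(4) assms(2) by (intro in_supp) (auto simp: clamp01_def)
    ultimately show "n \<in> {n. U \<inter> supp sine_space (sine_bumps n) \<noteq> {}}"
      by blast
  qed
  then show "infinite {n. U \<inter> supp sine_space (sine_bumps n) \<noteq> {}}"
    using infinite_Ici finite_subset by blast
qed

section \<open>The extension is disconnected\<close>

definition sine_separator :: "real \<times> real \<Rightarrow> real" where
  "sine_separator z = max (snd z) (clamp01 (3 * snd (sine_param (fst z))))"

lemma continuous_map_sine_separator:
  "continuous_map (prod_topology sine_space (top_of_set {0..1})) euclideanreal sine_separator"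
proof -
  let ?Y = "prod_topology sine_space (top_of_set {0..1::real})"
  have "continuous_map ?Y euclideanreal snd"
    using continuous_map_snd[of sine_space "top_of_set {0..1::real}"]
    by (simp add: continuous_map_in_subtopology)
  moreover have "continuous_map sine_space euclideanreal (\<lambda>t. clamp01 (3 * snd (sine_param t)))"
    by (intro continuous_map_sine_space continuous_intros)
  then have "continuous_map ?Y euclideanreal (\<lambda>z. clamp01 (3 * snd (sine_param (fst z))))"
    using continuous_map_compose[OF continuous_map_fst] by (simp add: o_def)
  ultimately show ?thesis
    unfolding sine_separator_def[abs_def] by (rule continuous_map_real_max)
qed

text \<open>Over the segment the sum is \<open>0\<close> and \<open>D\<close> avoids the heights \<open>[-1, 2/3)\<close>; over the graph
  either the height is at least \<open>1/3\<close> or the sum of the bumps is \<open>1\<close>.\<close>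
lemma sine_separator_on_graph:
  assumes "x \<in> Dset sine_space sine_bumps"
  shows "sine_separator (x, \<Sum>n. sine_bumps n x) \<in> {0, 1}"
proof (cases "x \<le> 1")
  case True
  have "\<not> (-1 \<le> x \<and> x < 2/3)"
    using assms sine_segment_not_in_Dset by blast
  then have "x < -1 \<or> 2/3 \<le> x"
    by linarith
  then show ?thesis
    using True by (auto simp: sine_separator_def sine_param_def clamp01_def)
next
  case False
  then show ?thesis
    by (auto simp: sine_separator_def sine_param_def suminf_sine_bumps clamp01_def)
qed

lemma sine_separator_extension: "sine_separator ` extension sine_space sine_bumps \<subseteq> {0, 1}"
proof -
  let ?Y = "prod_topology sine_space (top_of_set {0..1::real})"
  have "extension sine_space sine_bumps \<subseteq> {z \<in> topspace ?Y. sine_separator z \<in> {0, 1}}"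
  proof (rule extension_subset_closedin)
    show "closedin ?Y {z \<in> topspace ?Y. sine_separator z \<in> {0, 1}}"
      by (rule closedin_continuous_map_preimage[OF continuous_map_sine_separator])
        (simp add: closed_closedin[symmetric])
    show "(x, \<Sum>n. sine_bumps n x) \<in> {z \<in> topspace ?Y. sine_separator z \<in> {0, 1}}"
      if "x \<in> Dset sine_space sine_bumps" for x
      using that sine_separator_on_graph[OF that] Dset_subset_topspace[of sine_space sine_bumps]
        suminf_sine_bumps_range[of x]
      by auto
  qed
  then show ?thesis
    by blast
qed

theorem theorem4p1:
  "\<exists>(X :: real topology) (f :: nat \<Rightarrow> real \<Rightarrow> real).
     continuum X \<and> (\<forall>n. f n \<in> C1 X) \<and> pairwise_disjoint_seq X f \<and>
     \<not> connectedin (prod_topology X (top_of_set {0..1})) (extension X f)"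
proof (intro exI conjI allI)
  have segment_ends:
    "(-2, 0) \<in> extension sine_space sine_bumps" "(1, 0) \<in> extension sine_space sine_bumps"
    using graph_point_in_extension[OF sine_segment_in_Dset] by fastforce+
  show "\<not> connectedin (prod_topology sine_space (top_of_set {0..1}))
                      (extension sine_space sine_bumps)"
    by (rule not_connectedin_two_valued[OF continuous_map_sine_separator sine_separator_extension
          segment_ends(1) _ segment_ends(2)])
      (simp_all add: sine_separator_def sine_param_def clamp01_def)
qed (simp_all add: continuum_sine_space sine_bumps_in_C1 pairwise_disjoint_sine_bumps)

end
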